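(* Let $(\mathcal L,S,\pi_0,\pi_1,\sigma)$ be a summable category with flip $c$. For $l\in\mathbb N$ and an object $X$ define $c^{(l)}_X\in\mathcal L(S^{l+2}X,S^{l+2}X)$ by $c^{(0)}_X=c_X$ and $c^{(l+1)}_X=c_{S^{l+1}X}\circ S(c^{(l)}_X)$. Then for all $i_0,\dots,i_{l+1}\in\{0,1\}$, $$\pi_{i_{l+1}}\circ\cdots\circ\pi_{i_0}\circ c^{(l)}_X=\pi_{i_0}\circ\pi_{i_{l+1}}\circ\cdots\circ\pi_{i_1}$$ as morphisms $S^{l+2}X\to X$ (each $\pi_i$ taken at the appropriate object).
   Context: A summable category consists of a category $\mathcal L$ with zero morphisms, a functor $S:\mathcal L\to\mathcal L$ and natural transformations $\pi_0,\pi_1,\sigma:S\Rightarrow\mathrm{Id}$ with $\pi_0,\pi_1$ jointly monic, satisfying the axioms of summable categories of Ehrhard's coherent differentiation. These axioms guarantee the existence of a natural transformation $c:S^2\Rightarrow S^2$ (the flip) uniquely characterised by $\pi_i\circ\pi_j\circ c_X=\pi_j\circ\pi_i$ for all $i,j\in\{0,1\}$. *)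

theory Defs
  imports Main
begin

text \<open>A category is given by arrows (predicate arr on type 'm), domain/codomain
 maps into the type of objects 'o (every element of 'o is an object),
 composition comp g f (= g after f) and identities. It is equipped with zero
 morphisms, an endofunctor S = (So, Sm), and families pr0, pr1, sg indexed by
 objects (components of the natural transformations S => Id).\<close>

record ('o, 'm) sumcat =
  arr   :: "'m \<Rightarrow> bool"
  dom   :: "'m \<Rightarrow> 'o"
  cod   :: "'m \<Rightarrow> 'o"
  comp  :: "'m \<Rightarrow> 'm \<Rightarrow> 'm"
  ident :: "'o \<Rightarrow> 'm"
  zero  :: "'o \<Rightarrow> 'o \<Rightarrow> 'm"
  So    :: "'o \<Rightarrow> 'o"
  Sm    :: "'m \<Rightarrow> 'm"
  pr0   :: "'o \<Rightarrow> 'm"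
  pr1   :: "'o \<Rightarrow> 'm"
  sg    :: "'o \<Rightarrow> 'm"

definition hom :: "('o, 'm) sumcat \<Rightarrow> 'o \<Rightarrow> 'o \<Rightarrow> 'm set" where
  "hom C X Y = {f. arr C f \<and> dom C f = X \<and> cod C f = Y}"

definition is_category :: "('o, 'm) sumcat \<Rightarrow> bool" where
  "is_category C \<longleftrightarrow>
     (\<forall>X. ident C X \<in> hom C X X) \<and>
     (\<forall>f g. arr C f \<and> arr C g \<and> cod C f = dom C g \<longrightarrow>
              comp C g f \<in> hom C (dom C f) (cod C g)) \<and>
     (\<forall>f. arr C f \<longrightarrow> comp C f (ident C (dom C f)) = f \<and> comp C (ident C (cod C f)) f = f) \<and>
     (\<forall>f g h. arr C f \<and> arr C g \<and> arr C h \<and> cod C f = dom C g \<and> cod C g = dom C h \<longrightarrow>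
              comp C h (comp C g f) = comp C (comp C h g) f)"

definition has_zero_morphisms :: "('o, 'm) sumcat \<Rightarrow> bool" where
  "has_zero_morphisms C \<longleftrightarrow>
     (\<forall>X Y. zero C X Y \<in> hom C X Y) \<and>
     (\<forall>X Y Z f. f \<in> hom C X Y \<longrightarrow>
        comp C (zero C Y Z) f = zero C X Z \<and> comp C f (zero C Z X) = zero C Z Y)"

definition is_endofunctor_S :: "('o, 'm) sumcat \<Rightarrow> bool" where
  "is_endofunctor_S C \<longleftrightarrow>
     (\<forall>f. arr C f \<longrightarrow> Sm C f \<in> hom C (So C (dom C f)) (So C (cod C f))) \<and>
     (\<forall>X. Sm C (ident C X) = ident C (So C X)) \<and>
     (\<forall>f g. arr C f \<and> arr C g \<and> cod C f = dom C g \<longrightarrow>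
              Sm C (comp C g f) = comp C (Sm C g) (Sm C f))"

definition nat_S_Id :: "('o, 'm) sumcat \<Rightarrow> ('o \<Rightarrow> 'm) \<Rightarrow> bool" where
  "nat_S_Id C \<eta> \<longleftrightarrow>
     (\<forall>X. \<eta> X \<in> hom C (So C X) X) \<and>
     (\<forall>f. arr C f \<longrightarrow> comp C f (\<eta> (dom C f)) = comp C (\<eta> (cod C f)) (Sm C f))"

definition jointly_monic :: "('o, 'm) sumcat \<Rightarrow> bool" where
  "jointly_monic C \<longleftrightarrow>
     (\<forall>X Y f g. f \<in> hom C Y (So C X) \<and> g \<in> hom C Y (So C X) \<and>
        comp C (pr0 C X) f = comp C (pr0 C X) g \<and> comp C (pr1 C X) f = comp C (pr1 C X) g
        \<longrightarrow> f = g)"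

text \<open>(f0,f1) in L(X,Y) is summable with sum s: there is a witness h : X -> S Y
 with pr0 h = f0, pr1 h = f1 and sg h = s (the witness is unique by joint monicity).\<close>
definition has_sum :: "('o, 'm) sumcat \<Rightarrow> 'o \<Rightarrow> 'o \<Rightarrow> 'm \<Rightarrow> 'm \<Rightarrow> 'm \<Rightarrow> bool" where
  "has_sum C X Y f0 f1 s \<longleftrightarrow>
     (\<exists>h \<in> hom C X (So C Y). comp C (pr0 C Y) h = f0 \<and> comp C (pr1 C Y) h = f1 \<and>
                             comp C (sg C Y) h = s)"

definition summable :: "('o, 'm) sumcat \<Rightarrow> 'o \<Rightarrow> 'o \<Rightarrow> 'm \<Rightarrow> 'm \<Rightarrow> bool" where
  "summable C X Y f0 f1 \<longleftrightarrow> (\<exists>s. has_sum C X Y f0 f1 s)"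

definition summable_category :: "('o, 'm) sumcat \<Rightarrow> bool" where
  "summable_category C \<longleftrightarrow>
     is_category C \<and> has_zero_morphisms C \<and> is_endofunctor_S C \<and>
     nat_S_Id C (pr0 C) \<and> nat_S_Id C (pr1 C) \<and> nat_S_Id C (sg C) \<and>
     jointly_monic C \<and>
     \<comment> \<open>(S+-zero)\<close>
     (\<forall>X Y f. f \<in> hom C X Y \<longrightarrow>
        has_sum C X Y f (zero C X Y) f \<and> has_sum C X Y (zero C X Y) f f) \<and>
     \<comment> \<open>(S+-witness)\<close>
     (\<forall>X Y f0 f1. f0 \<in> hom C X (So C Y) \<and> f1 \<in> hom C X (So C Y) \<and>
        summable C X Y (comp C (pr0 C Y) f0) (comp C (pr0 C Y) f1) \<and>
        summable C X Y (comp C (pr1 C Y) f0) (comp C (pr1 C Y) f1)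
        \<longrightarrow> summable C X (So C Y) f0 f1) \<and>
     \<comment> \<open>(S+-com)\<close>
     (\<forall>X Y f0 f1 s. has_sum C X Y f0 f1 s \<longrightarrow> has_sum C X Y f1 f0 s) \<and>
     \<comment> \<open>(S+-assoc)\<close>
     (\<forall>X Y f00 f01 f10 f11 s0 s1 s.
        has_sum C X Y f00 f01 s0 \<and> has_sum C X Y f10 f11 s1 \<and> has_sum C X Y s0 s1 s
        \<longrightarrow> (\<exists>t0 t1. has_sum C X Y f00 f10 t0 \<and> has_sum C X Y f01 f11 t1 \<and>
                     has_sum C X Y t0 t1 s))"

definition prj :: "('o, 'm) sumcat \<Rightarrow> nat \<Rightarrow> 'o \<Rightarrow> 'm" where
  "prj C i X = (if i = 0 then pr0 C X else pr1 C X)"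

text \<open>c is the flip: c_X : S^2 X -> S^2 X with pi_i o pi_j o c_X = pi_j o pi_i
 (pi_j taken at S X, pi_i at X). By joint monicity this determines c uniquely.\<close>
definition is_flip :: "('o, 'm) sumcat \<Rightarrow> ('o \<Rightarrow> 'm) \<Rightarrow> bool" where
  "is_flip C c \<longleftrightarrow>
     (\<forall>X. c X \<in> hom C (So C (So C X)) (So C (So C X)) \<and>
        (\<forall>i\<in>{0,1}. \<forall>j\<in>{0,1}.
           comp C (prj C i X) (comp C (prj C j (So C X)) (c X)) =
           comp C (prj C j X) (prj C i (So C X))))"

text \<open>proj_chain C idx n X = pi_{idx(n-1)} o ... o pi_{idx 0} : S^n X -> X,
 where pi_{idx 0} is taken at S^(n-1) X, ..., pi_{idx(n-1)} at X.\<close>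
fun proj_chain :: "('o, 'm) sumcat \<Rightarrow> (nat \<Rightarrow> nat) \<Rightarrow> nat \<Rightarrow> 'o \<Rightarrow> 'm" where
  "proj_chain C idx 0 X = ident C X"
| "proj_chain C idx (Suc n) X =
     comp C (proj_chain C (\<lambda>k. idx (Suc k)) n X) (prj C (idx 0) ((So C ^^ n) X))"

fun iter_flip :: "('o, 'm) sumcat \<Rightarrow> ('o \<Rightarrow> 'm) \<Rightarrow> nat \<Rightarrow> 'o \<Rightarrow> 'm" where
  "iter_flip C c 0 X = c X"
| "iter_flip C c (Suc l) X = comp C (c ((So C ^^ Suc l) X)) (Sm C (iter_flip C c l X))"

end

theory Submission
  imports Defs
begin

text \<open>In \<open>c(l+1) = c(S^(l+1) X) \<circ> S(c(l))\<close> the outer flip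
  exchanges the two innermost projections \<open>\<pi>(i1) \<circ> \<pi>(i0)\<close>; by naturality, \<open>\<pi>(i1)\<close> then
  commutes past \<open>S(c(l))\<close>, and the induction hypothesis for the index sequence
  \<open>i0, i2, \<dots>, i(l+2)\<close> moves \<open>\<pi>(i0)\<close> to the outside.\<close>

locale flip_category =
  fixes C :: "('o, 'm) sumcat" and c :: "'o \<Rightarrow> 'm"
  assumes category: "is_category C"
    and endofunctor: "is_endofunctor_S C"
    and pr0_natural: "nat_S_Id C (pr0 C)"
    and pr1_natural: "nat_S_Id C (pr1 C)"
    and flip: "is_flip C c"
begin

lemma arr_comp [simp]:
  assumes "arr C f" "arr C g" "cod C f = dom C g"
  shows "arr C (comp C g f)" "dom C (comp C g f) = dom C f" "cod C (comp C g f) = cod C g"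
  using category assms unfolding is_category_def hom_def by auto

lemma comp_assoc:
  assumes "arr C f" "arr C g" "arr C h" "cod C f = dom C g" "cod C g = dom C h"
  shows "comp C (comp C h g) f = comp C h (comp C g f)"
  using category assms unfolding is_category_def by metis

lemma comp_ident_left [simp]: "arr C f \<Longrightarrow> cod C f = Y \<Longrightarrow> comp C (ident C Y) f = f"
  using category unfolding is_category_def by blast

lemma arr_Sm [simp]:
  assumes "arr C f"
  shows "arr C (Sm C f)" "dom C (Sm C f) = So C (dom C f)" "cod C (Sm C f) = So C (cod C f)"
  using endofunctor assms unfolding is_endofunctor_S_def hom_def by auto

lemma arr_prj [simp]: "arr C (prj C i X)" "dom C (prj C i X) = So C X" "cod C (prj C i X) = X"
  using pr0_natural pr1_natural unfolding nat_S_Id_def prj_def hom_def by auto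

lemma prj_natural:
  "arr C f \<Longrightarrow> comp C (prj C i (cod C f)) (Sm C f) = comp C f (prj C i (dom C f))"
  using pr0_natural pr1_natural unfolding nat_S_Id_def prj_def by auto

lemma arr_flip [simp]: "arr C (c X)" "dom C (c X) = So C (So C X)" "cod C (c X) = So C (So C X)"
  using flip unfolding is_flip_def hom_def by auto

text \<open>\<open>prj C i\<close> is \<open>pr1 C\<close> for every \<open>i \<noteq> 0\<close>, so the cases \<open>i, j \<in> {0, 1}\<close> of the
  flip equations cover all indices; this is why the main theorem does not need its
  hypothesis \<open>idx k \<in> {0, 1}\<close>.\<close>
lemma prj_flip:
  "comp C (prj C i X) (comp C (prj C j (So C X)) (c X)) = comp C (prj C j X) (prj C i (So C X))"
proof -
  have "\<forall>i\<in>{0, 1}. \<forall>j\<in>{0, 1}. comp C (prj C i X) (comp C (prj C j (So C X)) (c X)) =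
      comp C (prj C j X) (prj C i (So C X))"
    using flip unfolding is_flip_def by blast
  then show ?thesis
    by (simp add: prj_def split: if_splits)
qed

lemma arr_proj_chain [simp]:
  "arr C (proj_chain C idx n X)" "dom C (proj_chain C idx n X) = (So C ^^ n) X"
  "cod C (proj_chain C idx n X) = X"
  by (induction n arbitrary: idx) (use category in \<open>auto simp: is_category_def hom_def\<close>)

lemma arr_iter_flip [simp]:
  "arr C (iter_flip C c l X)" "dom C (iter_flip C c l X) = (So C ^^ Suc (Suc l)) X"
  "cod C (iter_flip C c l X) = (So C ^^ Suc (Suc l)) X"
  by (induction l) auto

lemma proj_chain_iter_flip:
  "comp C (proj_chain C (case_nat i js) (Suc (Suc l)) X) (iter_flip C c l X) =
   comp C (prj C i X) (proj_chain C js (Suc l) (So C X))"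
proof (induction l arbitrary: js)
  case 0
  show ?case by (simp add: comp_assoc prj_flip)
next
  case (Suc l)
  define Y where "Y = (So C ^^ Suc l) X"
  define Q where "Q = proj_chain C (\<lambda>k. js (Suc k)) (Suc l) X"
  define F where "F = iter_flip C c l X"
  have "comp C (proj_chain C (case_nat i js) (Suc (Suc (Suc l))) X) (iter_flip C c (Suc l) X)
      = comp C Q (comp C (comp C (prj C (js 0) Y) (comp C (prj C i (So C Y)) (c Y))) (Sm C F))"
    by (simp add: Y_def Q_def F_def comp_assoc)
  also have "\<dots> = comp C Q (comp C (comp C (prj C i Y) (prj C (js 0) (So C Y))) (Sm C F))"
    by (simp only: prj_flip)
  also have "\<dots> = comp C Q (comp C (prj C i Y) (comp C (prj C (js 0) (So C Y)) (Sm C F)))"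
    by (simp add: Y_def F_def comp_assoc)
  also have "\<dots> = comp C Q (comp C (prj C i Y) (comp C F (prj C (js 0) (So C Y))))"
    using prj_natural[of F "js 0"] by (simp add: Y_def F_def)
  also have "\<dots> = comp C (comp C (proj_chain C (case_nat i (\<lambda>k. js (Suc k))) (Suc (Suc l)) X) F)
                    (prj C (js 0) (So C Y))"
    by (simp add: Y_def Q_def F_def comp_assoc)
  also have "\<dots> = comp C (comp C (prj C i X) (proj_chain C (\<lambda>k. js (Suc k)) (Suc l) (So C X)))
                    (prj C (js 0) (So C Y))"
    unfolding F_def Suc.IH ..
  also have "\<dots> = comp C (prj C i X) (proj_chain C js (Suc (Suc l)) (So C X))"
    by (simp add: Y_def comp_assoc funpow_swap1)
  finally show ?case .
qed

end

theorem mainTheorem2: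
  fixes C :: "('o, 'm) sumcat" and c :: "'o \<Rightarrow> 'm" and l :: nat and X :: 'o
    and idx :: "nat \<Rightarrow> nat"
  assumes "summable_category C"
    and "is_flip C c"
    and "\<forall>k \<le> Suc l. idx k \<in> {0, 1}"
  shows "comp C (proj_chain C idx (Suc (Suc l)) X) (iter_flip C c l X) =
         comp C (prj C (idx 0) X) (proj_chain C (\<lambda>k. idx (Suc k)) (Suc l) (So C X))"
proof -
  interpret flip_category C c
    using assms(1,2) by unfold_locales (simp_all add: summable_category_def)
  have "case_nat (idx 0) (\<lambda>k. idx (Suc k)) = idx"
    by (auto split: nat.split)
  then show ?thesis
    using proj_chain_iter_flip[of "idx 0" "\<lambda>k. idx (Suc k)"] by simp
qed

end
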